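(* Let $D$ be a digraph with at least one cycle, and let $c$ and $g$ be its circumference and girth, respectively. Then $\chi_A(D)\le \left\lceil \frac{c-1}{g-1}\right\rceil+1$.
   Context: Digraphs are finite and loopless; paths and cycles are directed. The girth (resp. circumference) of a digraph is the length of a shortest (resp. longest) directed cycle. A set of vertices is acyclic if the subdigraph it induces contains no directed cycle. The dichromatic number $\chi_A(D)$ is the minimum $k$ such that $V(D)$ can be colored with $k$ colors so that every color class is acyclic. *)

theory Defs
  imports Complex_Main
begin

definition digraph :: "'a set \<Rightarrow> ('a \<times> 'a) set \<Rightarrow> bool" where
  "digraph V E \<longleftrightarrow> finite V \<and> E \<subseteq> V \<times> V \<and> (\<forall>v. (v, v) \<notin> E)"

text \<open>Since E is loopless every cycle has length at least 2.\<close>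
definition is_cycle :: "('a \<times> 'a) set \<Rightarrow> 'a list \<Rightarrow> bool" where
  "is_cycle E cs \<longleftrightarrow> cs \<noteq> [] \<and> distinct cs \<and>
     (\<forall>i < length cs. (cs ! i, cs ! ((i + 1) mod length cs)) \<in> E)"

definition cycle_lengths :: "('a \<times> 'a) set \<Rightarrow> nat set" where
  "cycle_lengths E = {length cs | cs. is_cycle E cs}"

definition girth :: "('a \<times> 'a) set \<Rightarrow> nat" where
  "girth E = Min (cycle_lengths E)"

definition circumference :: "('a \<times> 'a) set \<Rightarrow> nat" where
  "circumference E = Max (cycle_lengths E)"

definition acyclic_set :: "('a \<times> 'a) set \<Rightarrow> 'a set \<Rightarrow> bool" where
  "acyclic_set E S \<longleftrightarrow> \<not> (\<exists>cs. is_cycle (E \<inter> (S \<times> S)) cs)"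

definition dichromatic_number :: "'a set \<Rightarrow> ('a \<times> 'a) set \<Rightarrow> nat" where
  "dichromatic_number V E = (LEAST k. \<exists>f. f ` V \<subseteq> {..<k} \<and>
      (\<forall>i<k. acyclic_set E {v \<in> V. f v = i}))"

end

theory Submission
  imports Defs
begin

text \<open>Give every vertex a depth as in a depth-first search forest. Every cycle then contains
  an arc from a vertex a back to an ancestor b, which together with the tree path from b to a
  forms a cycle of length d a - d b + 1, so g - 1 \<le> d a - d b \<le> c - 1. Cutting the depths
  into blocks of g - 1 consecutive values and colouring the blocks cyclically with
  \<lceil>(c - 1) / (g - 1)\<rceil> + 1 colours separates a from b, hence no colour class contains a cycle.\<close>

definition is_path :: "('a \<times> 'a) set \<Rightarrow> 'a list \<Rightarrow> bool" where
  "is_path E p \<longleftrightarrow> p \<noteq> [] \<and> distinct p \<and> successively (\<lambda>x y. (x, y) \<in> E) p"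

lemma is_path_singleton: "is_path E [x]"
  by (simp add: is_path_def)

lemma is_path_Cons:
  assumes "is_path E p" "x \<notin> set p" "(x, hd p) \<in> E"
  shows "is_path E (x # p)"
  using assms by (auto simp: is_path_def successively_Cons)

lemma is_cycle_if_closed_path:
  assumes "is_path E p" "(last p, hd p) \<in> E"
  shows "is_cycle E p"
  unfolding is_cycle_def
proof (intro conjI allI impI)
  show "p \<noteq> []" "distinct p" using assms(1) by (auto simp: is_path_def)
  fix i assume i: "i < length p"
  show "(p ! i, p ! ((i + 1) mod length p)) \<in> E"
  proof (cases "Suc i < length p")
    case True
    then show ?thesis using assms(1) by (simp add: is_path_def successively_conv_nth)
  next
    case False
    then have "Suc i = length p" using i by simp
    then have "i = length p - 1" "(i + 1) mod length p = 0" by auto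
    then show ?thesis using assms \<open>p \<noteq> []\<close> by (simp add: last_conv_nth hd_conv_nth)
  qed
qed

lemma is_cycle_Int_Times:
  "is_cycle (E \<inter> S \<times> S) cs \<longleftrightarrow> is_cycle E cs \<and> set cs \<subseteq> S"
proof -
  have "set cs \<subseteq> S" if "is_cycle (E \<inter> S \<times> S) cs"
    using that by (fastforce simp: is_cycle_def in_set_conv_nth)
  moreover have "(cs ! i, cs ! ((i + 1) mod length cs)) \<in> S \<times> S"
    if "set cs \<subseteq> S" "i < length cs" for i
  proof -
    have "0 < length cs" using that(2) by linarith
    then have "(i + 1) mod length cs < length cs" by simp
    then show ?thesis using that by (auto intro: nth_mem)
  qed
  ultimately show ?thesis unfolding is_cycle_def by blast
qed

lemma is_cycle_has_predecessor:
  assumes "is_cycle E cs" "y \<in> set cs"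
  shows "\<exists>x\<in>set cs. (x, y) \<in> E"
proof -
  define n where "n = length cs"
  obtain j where j: "j < n" "cs ! j = y" using assms(2) by (auto simp: in_set_conv_nth n_def)
  define i where "i = (j + n - 1) mod n"
  have "(i + 1) mod n = j" using j by (simp add: i_def mod_Suc_eq)
  moreover have "i < n" using j by (simp add: i_def)
  ultimately have "(cs ! i, y) \<in> E" using assms(1) j unfolding is_cycle_def n_def by metis
  then show ?thesis using \<open>i < n\<close> by (auto simp: n_def)
qed

lemma is_cycle_subset_closed:
  assumes cyc: "is_cycle E cs" and "a \<in> set cs" "a \<in> A" and closed: "E `` A \<inter> set cs \<subseteq> A"
  shows "set cs \<subseteq> A"
proof -
  define n where "n = length cs"
  obtain j where j: "j < n" "cs ! j = a" using assms(2) by (auto simp: in_set_conv_nth n_def)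
  have step: "cs ! ((j + k) mod n) \<in> A" for k
  proof (induction k)
    case 0
    then show ?case using j assms(3) by simp
  next
    case (Suc k)
    have "(j + k) mod n < n" "((j + k) mod n + 1) mod n = (j + Suc k) mod n"
      using j by (auto simp: mod_Suc_eq)
    then have "(cs ! ((j + k) mod n), cs ! ((j + Suc k) mod n)) \<in> E"
      using cyc by (metis is_cycle_def n_def)
    moreover have "(j + Suc k) mod n < n" using j by (simp del: add_Suc_right)
    then have "cs ! ((j + Suc k) mod n) \<in> set cs" by (simp add: n_def)
    ultimately show ?case using Suc closed by blast
  qed
  show ?thesis
  proof
    fix v assume "v \<in> set cs"
    then obtain i where "i < n" "cs ! i = v" by (auto simp: in_set_conv_nth n_def)
    moreover have "(j + (n - j + i)) mod n = i" using j \<open>i < n\<close> by simp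
    ultimately show "v \<in> A" using step by metis
  qed
qed

lemma is_cycle_length_ge_2:
  assumes "\<forall>v. (v, v) \<notin> E" "is_cycle E cs"
  shows "2 \<le> length cs"
proof (rule ccontr)
  assume "\<not> 2 \<le> length cs"
  moreover have "cs \<noteq> []" using assms(2) by (simp add: is_cycle_def)
  ultimately obtain x where "cs = [x]" by (metis length_0_conv length_Suc_conv less_2_cases not_le)
  then have "(x, x) \<in> E" using assms(2) unfolding is_cycle_def by force
  then show False using assms(1) by blast
qed

lemma finite_cycle_lengths:
  assumes "finite V" "E \<subseteq> V \<times> V"
  shows "finite (cycle_lengths E)"
proof (rule finite_subset)
  show "cycle_lengths E \<subseteq> {..card V}"
  proof
    fix n assume "n \<in> cycle_lengths E"
    then obtain cs where cs: "is_cycle E cs" "n = length cs" by (auto simp: cycle_lengths_def)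
    then have "set cs \<subseteq> V" using assms(2) is_cycle_Int_Times[of E V cs] by (simp add: Int_absorb2)
    moreover have "distinct cs" using cs(1) by (simp add: is_cycle_def)
    ultimately have "length cs \<le> card V" using assms(1) card_mono distinct_card by metis
    then show "n \<in> {..card V}" using cs(2) by simp
  qed
qed simp

text \<open>The two properties of depths in a depth-first search forest rooted in X that the argument
  uses; the vertices witnessing a cycle are the endpoints of one of its back arcs.\<close>

definition rooted_depth :: "('a \<times> 'a) set \<Rightarrow> 'a set \<Rightarrow> 'a set \<Rightarrow> ('a \<Rightarrow> nat) \<Rightarrow> bool" where
  "rooted_depth E W X d \<longleftrightarrow>
     (\<forall>v\<in>W. \<exists>p. is_path E p \<and> set p \<subseteq> W \<and> hd p \<in> X \<and> last p = v \<and> length p = Suc (d v))"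

definition depth_witnesses_cycles :: "('a \<times> 'a) set \<Rightarrow> 'a set \<Rightarrow> ('a \<Rightarrow> nat) \<Rightarrow> bool" where
  "depth_witnesses_cycles E W d \<longleftrightarrow>
     (\<forall>cs. is_cycle E cs \<and> set cs \<subseteq> W \<longrightarrow>
        (\<exists>a\<in>set cs. \<exists>b\<in>set cs. d b < d a \<and> Suc (d a - d b) \<in> cycle_lengths E))"

lemma rooted_depth_Cons_root:
  assumes "rooted_depth E (A - {x}) {y \<in> A - {x}. (x, y) \<in> E} d" "v \<in> A - {x}"
  shows "\<exists>p. is_path E p \<and> set p \<subseteq> insert x A \<and> hd p = x \<and> last p = v \<and> length p = Suc (Suc (d v))"
proof -
  obtain p where p: "is_path E p" "set p \<subseteq> A - {x}" "hd p \<in> A - {x}" "(x, hd p) \<in> E"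
      "last p = v" "length p = Suc (d v)"
    using assms unfolding rooted_depth_def by blast
  then have "is_path E (x # p)" by (auto intro: is_path_Cons)
  moreover have "last (x # p) = v" using p(5,6) by auto
  moreover have "set (x # p) \<subseteq> insert x A" using p(2) by auto
  ultimately show ?thesis using p(6) by (intro exI[of _ "x # p"]) simp
qed

text \<open>One step of depth-first search from a root x: x gets depth 0, the set A of vertices
  reachable from x is explored recursively from the out-neighbours of x, one level deeper, and
  the rest W - A independently. No arc leaves A inside W, so a cycle meeting A lies in A, and a
  cycle through x returns to x from a vertex of A - {x}.\<close>

lemma rooted_depth_combine:
  assumes "x \<in> A" "A \<subseteq> W" "x \<in> Y" "X \<subseteq> Y"
    and "rooted_depth E (A - {x}) {y \<in> A - {x}. (x, y) \<in> E} d1"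
    and "rooted_depth E (W - A) X d2"
  shows "rooted_depth E W Y (\<lambda>v. if v = x then 0 else if v \<in> A then Suc (d1 v) else d2 v)"
  unfolding rooted_depth_def
proof
  fix v assume "v \<in> W"
  consider "v = x" | "v \<in> A - {x}" | "v \<in> W - A" using \<open>v \<in> W\<close> by blast
  then show "\<exists>p. is_path E p \<and> set p \<subseteq> W \<and> hd p \<in> Y \<and> last p = v \<and>
      length p = Suc (if v = x then 0 else if v \<in> A then Suc (d1 v) else d2 v)"
  proof cases
    case 1
    then show ?thesis using assms(1-3) by (intro exI[of _ "[x]"]) (auto simp: is_path_singleton)
  next
    case 2
    then obtain p where "is_path E p" "set p \<subseteq> insert x A" "hd p = x" "last p = v"
        "length p = Suc (Suc (d1 v))"
      using rooted_depth_Cons_root[OF assms(5)] by blast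
    then show ?thesis using 2 assms(1-3) by (intro exI[of _ p]) auto
  next
    case 3
    then obtain p where "is_path E p" "set p \<subseteq> W - A" "hd p \<in> X" "last p = v"
        "length p = Suc (d2 v)"
      using assms(6) unfolding rooted_depth_def by blast
    then show ?thesis using 3 assms(1,4) by (intro exI[of _ p]) auto
  qed
qed

lemma depth_witnesses_cycles_combine:
  assumes loopless: "\<forall>v. (v, v) \<notin> E" and "x \<in> A" "A \<subseteq> W" and closed: "E `` A \<inter> W \<subseteq> A"
    and root: "rooted_depth E (A - {x}) {y \<in> A - {x}. (x, y) \<in> E} d1"
    and inner: "depth_witnesses_cycles E (A - {x}) d1"
    and outer: "depth_witnesses_cycles E (W - A) d2"
  shows "depth_witnesses_cycles E W (\<lambda>v. if v = x then 0 else if v \<in> A then Suc (d1 v) else d2 v)"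
    (is "depth_witnesses_cycles E W ?d")
  unfolding depth_witnesses_cycles_def
proof (intro allI impI, elim conjE)
  fix cs assume cyc: "is_cycle E cs" and "set cs \<subseteq> W"
  show "\<exists>a\<in>set cs. \<exists>b\<in>set cs. ?d b < ?d a \<and> Suc (?d a - ?d b) \<in> cycle_lengths E"
  proof (cases "set cs \<inter> A = {}")
    case True
    then have "set cs \<subseteq> W - A" using \<open>set cs \<subseteq> W\<close> by blast
    then obtain a b where ab: "a \<in> set cs" "b \<in> set cs" "d2 b < d2 a"
        "Suc (d2 a - d2 b) \<in> cycle_lengths E"
      using outer cyc unfolding depth_witnesses_cycles_def by blast
    moreover have "?d a = d2 a" "?d b = d2 b" using ab(1,2) True \<open>x \<in> A\<close> by auto
    ultimately show ?thesis by (intro bexI[of _ a] bexI[of _ b]) simp_all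
  next
    case False
    then have "set cs \<subseteq> A"
      using is_cycle_subset_closed[OF cyc] closed \<open>set cs \<subseteq> W\<close> by blast
    show ?thesis
    proof (cases "x \<in> set cs")
      case True
      then obtain a where a: "a \<in> set cs" "(a, x) \<in> E" using is_cycle_has_predecessor[OF cyc] by blast
      with loopless \<open>set cs \<subseteq> A\<close> have "a \<in> A - {x}" by blast
      then obtain p where p: "is_path E p" "hd p = x" "last p = a" "length p = Suc (Suc (d1 a))"
        using rooted_depth_Cons_root[OF root] by blast
      then have "is_cycle E p" using is_cycle_if_closed_path[of E p] a(2) by simp
      then have "Suc (?d a - ?d x) \<in> cycle_lengths E"
        using p(4) \<open>a \<in> A - {x}\<close> unfolding cycle_lengths_def by force
      moreover have "?d x < ?d a" using \<open>a \<in> A - {x}\<close> by simp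
      ultimately show ?thesis using a(1) True by (intro bexI[of _ a] bexI[of _ x]) simp_all
    next
      case False
      then have "set cs \<subseteq> A - {x}" using \<open>set cs \<subseteq> A\<close> by blast
      then obtain a b where ab: "a \<in> set cs" "b \<in> set cs" "d1 b < d1 a"
          "Suc (d1 a - d1 b) \<in> cycle_lengths E"
        using inner cyc unfolding depth_witnesses_cycles_def by blast
      moreover have "?d a = Suc (d1 a)" "?d b = Suc (d1 b)"
        using ab(1,2) \<open>set cs \<subseteq> A - {x}\<close> by auto
      ultimately show ?thesis by (intro bexI[of _ a] bexI[of _ b]) simp_all
    qed
  qed
qed

lemma rtrancl_Int_Times_backward_closed:
  assumes "(y, v) \<in> R\<^sup>*" "v \<in> B" "\<forall>u w. (u, w) \<in> R \<longrightarrow> w \<in> B \<longrightarrow> u \<in> B"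
  shows "y \<in> B \<and> (y, v) \<in> (R \<inter> B \<times> B)\<^sup>*"
  using assms by (induction rule: converse_rtrancl_induct) (auto intro: converse_rtrancl_into_rtrancl)

lemma reachable_via_root_neighbour:
  assumes "(x, v) \<in> R\<^sup>*" "v \<noteq> x"
  shows "\<exists>y. (x, y) \<in> R \<and> y \<noteq> x \<and> (y, v) \<in> (R \<inter> (R\<^sup>* `` {x} - {x}) \<times> (R\<^sup>* `` {x} - {x}))\<^sup>*"
  using assms
proof (induction rule: rtrancl_induct)
  case base
  then show ?case by simp
next
  case (step u v)
  show ?case
  proof (cases "u = x")
    case True
    then show ?thesis using step by blast
  next
    case False
    then obtain y where y: "(x, y) \<in> R" "y \<noteq> x"
        "(y, u) \<in> (R \<inter> (R\<^sup>* `` {x} - {x}) \<times> (R\<^sup>* `` {x} - {x}))\<^sup>*"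
      using step.IH by blast
    moreover have "(u, v) \<in> R \<inter> (R\<^sup>* `` {x} - {x}) \<times> (R\<^sup>* `` {x} - {x})"
      using step False by auto
    ultimately show ?thesis by (meson rtrancl.rtrancl_into_rtrancl)
  qed
qed

definition reaches_within :: "('a \<times> 'a) set \<Rightarrow> 'a set \<Rightarrow> 'a set \<Rightarrow> bool" where
  "reaches_within E X W \<longleftrightarrow> (\<forall>w\<in>W. \<exists>x\<in>X. (x, w) \<in> (E \<inter> W \<times> W)\<^sup>*)"

lemma reaches_within_root_neighbours:
  assumes "A = (E \<inter> W \<times> W)\<^sup>* `` {x}"
  shows "reaches_within E {y \<in> A - {x}. (x, y) \<in> E} (A - {x})"
  unfolding reaches_within_def
proof
  define R where "R = E \<inter> W \<times> W"
  fix v assume "v \<in> A - {x}"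
  then obtain y where y: "(x, y) \<in> R" "y \<noteq> x" "(y, v) \<in> (R \<inter> (A - {x}) \<times> (A - {x}))\<^sup>*"
    using reachable_via_root_neighbour[of x v R] assms unfolding R_def by blast
  have "R \<inter> (A - {x}) \<times> (A - {x}) \<subseteq> E \<inter> (A - {x}) \<times> (A - {x})" by (auto simp: R_def)
  then have "(y, v) \<in> (E \<inter> (A - {x}) \<times> (A - {x}))\<^sup>*" using y(3) rtrancl_mono by blast
  moreover have "y \<in> {y \<in> A - {x}. (x, y) \<in> E}" using y(1,2) assms by (auto simp: R_def)
  ultimately show "\<exists>y\<in>{y \<in> A - {x}. (x, y) \<in> E}. (y, v) \<in> (E \<inter> (A - {x}) \<times> (A - {x}))\<^sup>*"
    by blast
qed

lemma reaches_within_outside_closed: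
  assumes "reaches_within E X W" "E `` A \<inter> W \<subseteq> A"
  shows "reaches_within E (X \<inter> (W - A)) (W - A)"
  unfolding reaches_within_def
proof
  define R where "R = E \<inter> W \<times> W"
  fix v assume "v \<in> W - A"
  then obtain y where "y \<in> X" "(y, v) \<in> R\<^sup>*" using assms(1) R_def by (auto simp: reaches_within_def)
  moreover have "\<forall>u w. (u, w) \<in> R \<longrightarrow> w \<in> W - A \<longrightarrow> u \<in> W - A"
    using assms(2) by (auto simp: R_def)
  ultimately have "y \<in> X \<inter> (W - A)" "(y, v) \<in> (R \<inter> (W - A) \<times> (W - A))\<^sup>*"
    using rtrancl_Int_Times_backward_closed[of y v R "W - A"] \<open>v \<in> W - A\<close> by simp_all
  moreover have "R \<inter> (W - A) \<times> (W - A) = E \<inter> (W - A) \<times> (W - A)" by (auto simp: R_def)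
  ultimately show "\<exists>y\<in>X \<inter> (W - A). (y, v) \<in> (E \<inter> (W - A) \<times> (W - A))\<^sup>*" by auto
qed

lemma ex_depth_witnessing_cycles:
  assumes "finite W" "\<forall>v. (v, v) \<notin> E" "reaches_within E X W"
  shows "\<exists>d. rooted_depth E W X d \<and> depth_witnesses_cycles E W d"
  using assms
proof (induction "card W" arbitrary: W X rule: less_induct)
  case less
  show ?case
  proof (cases "W = {}")
    case True
    then show ?thesis by (auto simp: rooted_depth_def depth_witnesses_cycles_def is_cycle_def)
  next
    case False
    define R where "R = E \<inter> W \<times> W"
    obtain w where "w \<in> W" using False by blast
    then obtain x where "x \<in> X" "(x, w) \<in> R\<^sup>*"
      using less.prems(3) R_def by (auto simp: reaches_within_def)
    then have "x \<in> W" using \<open>w \<in> W\<close> by (auto simp: R_def elim: converse_rtranclE)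
    define A where "A = R\<^sup>* `` {x}"
    have "x \<in> A" by (simp add: A_def)
    have "A \<subseteq> W" using \<open>x \<in> W\<close> by (auto simp: A_def R_def elim: rtranclE)
    have closed: "E `` A \<inter> W \<subseteq> A"
      using \<open>A \<subseteq> W\<close> by (auto simp: A_def R_def intro: rtrancl_into_rtrancl)
    have "A - {x} \<subset> W" "W - A \<subset> W" using \<open>x \<in> A\<close> \<open>A \<subseteq> W\<close> by auto
    then have card_inner: "card (A - {x}) < card W" and card_outer: "card (W - A) < card W"
      using less.prems(1) by (auto intro: psubset_card_mono)
    have dom_inner: "reaches_within E {y \<in> A - {x}. (x, y) \<in> E} (A - {x})"
      using reaches_within_root_neighbours[of A E W x] by (simp add: A_def R_def)
    obtain d1 where d1: "rooted_depth E (A - {x}) {y \<in> A - {x}. (x, y) \<in> E} d1"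
        "depth_witnesses_cycles E (A - {x}) d1"
      using less.hyps[OF card_inner _ less.prems(2) dom_inner] \<open>A \<subseteq> W\<close> less.prems(1)
        finite_subset[of "A - {x}" W] by blast
    have dom_outer: "reaches_within E (X \<inter> (W - A)) (W - A)"
      using reaches_within_outside_closed[OF less.prems(3) closed] .
    obtain d2 where d2: "rooted_depth E (W - A) (X \<inter> (W - A)) d2"
        "depth_witnesses_cycles E (W - A) d2"
      using less.hyps[OF card_outer finite_Diff[OF less.prems(1)] less.prems(2) dom_outer] by blast
    show ?thesis
      using rooted_depth_combine[OF \<open>x \<in> A\<close> \<open>A \<subseteq> W\<close> \<open>x \<in> X\<close> _ d1(1) d2(1)]
        depth_witnesses_cycles_combine[OF less.prems(2) \<open>x \<in> A\<close> \<open>A \<subseteq> W\<close> closed d1 d2(2)]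
      by blast
  qed
qed

lemma div_mod_Suc_neq_if_gap:
  fixes a b m K :: nat
  assumes "0 < m" "b + m \<le> a" "a \<le> b + m * K"
  shows "(a div m) mod (K + 1) \<noteq> (b div m) mod (K + 1)"
proof
  assume eq: "(a div m) mod (K + 1) = (b div m) mod (K + 1)"
  have "b div m + 1 \<le> a div m"
    using div_le_mono[OF assms(2), of m] assms(1) by simp
  moreover have "a div m \<le> b div m + K"
    using div_le_mono[OF assms(3), of m] assms(1) by simp
  moreover have "(K + 1) dvd (a div m - b div m)"
    using eq calculation(1) by (simp add: mod_eq_dvd_iff_nat)
  ultimately show False by (simp add: nat_dvd_not_less)
qed

lemma le_mult_nat_ceiling_divide:
  assumes "0 < m"
  shows "n \<le> m * nat \<lceil>real n / real m\<rceil>"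
proof -
  have "real n = real m * (real n / real m)" using assms by simp
  also have "\<dots> \<le> real m * \<lceil>real n / real m\<rceil>"
    by (intro mult_left_mono le_of_int_ceiling) simp
  finally have "real n \<le> real m * \<lceil>real n / real m\<rceil>" .
  moreover have "real (nat \<lceil>real n / real m\<rceil>) = \<lceil>real n / real m\<rceil>" by simp
  ultimately have "real n \<le> real (m * nat \<lceil>real n / real m\<rceil>)" by simp
  then show ?thesis by (simp only: of_nat_le_iff)
qed

lemma acyclic_depth_colour_class:
  assumes gap: "depth_witnesses_cycles E V d" and "0 < m"
    and lengths: "\<forall>l\<in>cycle_lengths E. m < l \<and> l \<le> Suc (m * K)"
  shows "acyclic_set E {v \<in> V. (d v div m) mod (K + 1) = i}" (is "acyclic_set E ?S")
  unfolding acyclic_set_def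
proof
  assume "\<exists>cs. is_cycle (E \<inter> ?S \<times> ?S) cs"
  then obtain cs where "is_cycle E cs" and in_class: "set cs \<subseteq> ?S"
    unfolding is_cycle_Int_Times by blast
  then obtain a b where ab: "a \<in> set cs" "b \<in> set cs" "d b < d a" "Suc (d a - d b) \<in> cycle_lengths E"
    using gap unfolding depth_witnesses_cycles_def by blast
  then have "d b + m \<le> d a" "d a \<le> d b + m * K" using lengths by force+
  then have "(d a div m) mod (K + 1) \<noteq> (d b div m) mod (K + 1)"
    using div_mod_Suc_neq_if_gap \<open>0 < m\<close> by blast
  then show False using ab(1,2) in_class by auto
qed

theorem theorem3:
  fixes V :: "'a set" and E :: "('a \<times> 'a) set"
  assumes "digraph V E"
    and "\<exists>cs. is_cycle E cs"
  shows "real (dichromatic_number V E)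
           \<le> real_of_int \<lceil>(real (circumference E) - 1) / (real (girth E) - 1)\<rceil> + 1"
proof -
  have "finite V" "E \<subseteq> V \<times> V" and loopless: "\<forall>v. (v, v) \<notin> E"
    using assms(1) by (auto simp: digraph_def)
  then obtain d where d: "depth_witnesses_cycles E V d"
    using ex_depth_witnessing_cycles[of V E V] by (auto simp: reaches_within_def)
  define g c where "g = girth E" and "c = circumference E"
  have "finite (cycle_lengths E)" using finite_cycle_lengths \<open>finite V\<close> \<open>E \<subseteq> V \<times> V\<close> by blast
  moreover have "cycle_lengths E \<noteq> {}" using assms(2) by (auto simp: cycle_lengths_def)
  ultimately have bounds: "\<forall>l\<in>cycle_lengths E. g \<le> l \<and> l \<le> c" and "g \<in> cycle_lengths E"
    by (simp_all add: g_def c_def girth_def circumference_def)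
  then have "2 \<le> g" "g \<le> c"
    using is_cycle_length_ge_2[OF loopless] by (auto simp: cycle_lengths_def)
  define K where "K = nat \<lceil>(real c - 1) / (real g - 1)\<rceil>"
  have "c - 1 \<le> (g - 1) * K"
    using le_mult_nat_ceiling_divide[of "g - 1" "c - 1"] \<open>2 \<le> g\<close> \<open>g \<le> c\<close>
    by (simp add: K_def of_nat_diff)
  then have "\<forall>l\<in>cycle_lengths E. g - 1 < l \<and> l \<le> Suc ((g - 1) * K)"
    using bounds \<open>2 \<le> g\<close> by force
  then have "\<forall>i. acyclic_set E {v \<in> V. (d v div (g - 1)) mod (K + 1) = i}"
    using acyclic_depth_colour_class[OF d] \<open>2 \<le> g\<close> by simp
  then have "dichromatic_number V E \<le> K + 1"
    unfolding dichromatic_number_def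
    by (intro Least_le exI[of _ "\<lambda>v. (d v div (g - 1)) mod (K + 1)"]) auto
  moreover have "real K = real_of_int \<lceil>(real c - 1) / (real g - 1)\<rceil>"
    using \<open>2 \<le> g\<close> \<open>g \<le> c\<close> by (simp add: K_def)
  ultimately show ?thesis by (simp add: g_def c_def)
qed

end
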